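(* Let $\mathfrak{g}$ be a Lie algebra over $\mathbb{F}$ with a symmetric invariant bilinear form $\langle\cdot,\cdot\rangle$, and let $\hat{\mathfrak{g}}=\mathfrak{g}\otimes\mathbb{F}[t,t^{-1}]\oplus\mathbb{F}\mathbf{k}$ be the affine Lie algebra with $\mathbf{k}$ central and $[a\otimes t^m,b\otimes t^n]=[a,b]\otimes t^{m+n}+m\langle a,b\rangle\delta_{m+n,0}\mathbf{k}$. Then $\hat{\mathfrak{g}}$ is an $\mathcal{H}$-module Lie algebra with, for $r\in\mathbb{N}$, $a\in\mathfrak{g}$, $n\in\mathbb{Z}$: $L_{-1}^{(r)}\mathbf{k}=L_1^{(r)}\mathbf{k}=L_0^{(r)}\mathbf{k}=\delta_{r,0}\mathbf{k}$, $L_{-1}^{(r)}(a\otimes t^n)=(-1)^r\binom{n}{r}a\otimes t^{n-r}$, $L_1^{(r)}(a\otimes t^n)=\binom{-n}{r}a\otimes t^{n+r}$, $L_0^{(r)}(a\otimes t^n)=\binom{2n}{r}a\otimes t^n$.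
   Context: $\mathbb{F}$ is an algebraically closed field of odd prime characteristic $p$. $\mathcal{H}$: let $\mathfrak{sl}_2$ over $\mathbb{C}$ have basis $L_{-1},L_0,L_1$ with $[L_1,L_{-1}]=2L_0$, $[L_0,L_{\pm1}]=\mp L_{\pm1}$; put $L_{\pm1}^{(n)}=L_{\pm1}^n/n!$, $L_0^{(n)}=\binom{-2L_0}{n}$ in $U(\mathfrak{sl}_2)$; $U(\mathfrak{sl}_2)_{\mathbb{Z}}$ is the $\mathbb{Z}$-span of the $L_{-1}^{(i)}L_0^{(j)}L_1^{(k)}$, and $\mathcal{H}=\mathbb{F}\otimes_{\mathbb{Z}}U(\mathfrak{sl}_2)_{\mathbb{Z}}$, a Hopf algebra with $\Delta(L_{\pm1}^{(n)})=\sum_iL_{\pm1}^{(n-i)}\otimes L_{\pm1}^{(i)}$, $\Delta(L_0^{(n)})=\sum_iL_0^{(n-i)}\otimes L_0^{(i)}$, $\varepsilon(L_{\pm1}^{(n)})=\varepsilon(L_0^{(n)})=\delta_{n,0}$; it is generated as an algebra by the $L_{\pm1}^{(n)}$. For a bialgebra $B$, a $B$-module Lie algebra is a Lie algebra $\mathfrak{a}$ with a $B$-module structure such that $b[u,v]=\sum[b^{(1)}u,b^{(2)}v]$ for $b\in B$, $u,v\in\mathfrak{a}$, where $\Delta(b)=\sum b^{(1)}\otimes b^{(2)}$. *)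

theory Defs
  imports Main "HOL-Computational_Algebra.Polynomial"
begin

text \<open>Elements of U(sl_2)_Q are modelled by their (faithful) action on the direct sum
  of all irreducible finite-dimensional sl_2-modules V(n), n = 0,1,2,...  An element is a
  block-diagonal matrix: u n i j is the (i,j) entry (0 \<le> i,j \<le> n) of its action on V(n),
  with respect to the basis v_0,...,v_n of V(n) (v_j = x^(n-j) y^j).  Entries outside
  0..n are zero for all elements considered.\<close>

type_synonym U = "nat \<Rightarrow> nat \<Rightarrow> nat \<Rightarrow> rat"

definition umult :: "U \<Rightarrow> U \<Rightarrow> U" where
  "umult A B = (\<lambda>n i k. \<Sum>j\<le>n. A n i j * B n j k)"

definition uone :: U where
  "uone = (\<lambda>n i j. if i = j \<and> i \<le> n then 1 else 0)"

definition uadd :: "U \<Rightarrow> U \<Rightarrow> U" where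
  "uadd A B = (\<lambda>n i j. A n i j + B n i j)"

definition uscale :: "rat \<Rightarrow> U \<Rightarrow> U" where
  "uscale c A = (\<lambda>n i j. c * A n i j)"

definition usum :: "'i set \<Rightarrow> ('i \<Rightarrow> U) \<Rightarrow> U" where
  "usum S f = (\<lambda>n i j. \<Sum>s\<in>S. f s n i j)"

definition sl2_e :: U where
  "sl2_e = (\<lambda>n i j. if j \<le> n \<and> j = i + 1 then of_nat j else 0)"

definition sl2_f :: U where
  "sl2_f = (\<lambda>n i j. if i \<le> n \<and> i = j + 1 then of_nat n - of_nat j else 0)"

definition sl2_h :: U where
  "sl2_h = (\<lambda>n i j. if i = j \<and> i \<le> n then of_nat n - 2 * of_nat i else 0)"

text \<open>The basis of the paper: L_1 = e, L_(-1) = -f, L_0 = -h/2; then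
  [L_1,L_(-1)] = 2 L_0 and [L_0,L_(+-1)] = -+ L_(+-1).\<close>

definition L_1 :: U where "L_1 = sl2_e"
definition L_m1 :: U where "L_m1 = uscale (-1) sl2_f"
definition L_0 :: U where "L_0 = uscale (-1/2) sl2_h"

fun upow :: "U \<Rightarrow> nat \<Rightarrow> U" where
  "upow A 0 = uone"
| "upow A (Suc r) = umult (upow A r) A"

fun ufall :: "U \<Rightarrow> nat \<Rightarrow> U" where
  "ufall A 0 = uone"
| "ufall A (Suc r) = umult (ufall A r) (uadd A (uscale (- of_nat r) uone))"

definition L_1_div :: "nat \<Rightarrow> U" where
  "L_1_div r = uscale (1 / fact r) (upow L_1 r)"

definition L_m1_div :: "nat \<Rightarrow> U" where
  "L_m1_div r = uscale (1 / fact r) (upow L_m1 r)"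

definition L_0_div :: "nat \<Rightarrow> U" where
  "L_0_div r = uscale (1 / fact r) (ufall (uscale (-2) L_0) r)"

definition pbw :: "nat \<Rightarrow> nat \<Rightarrow> nat \<Rightarrow> U" where
  "pbw i j k = umult (umult (L_m1_div i) (L_0_div j)) (L_1_div k)"

definition UZ :: "U set" where
  "UZ = {u. \<exists>S c. finite S \<and> u = usum S (\<lambda>m. uscale (of_int (c m)) (case m of (i,j,k) \<Rightarrow> pbw i j k))}"

text \<open>Generalized binomial coefficient binom(n, r) = n(n-1)...(n-r+1)/r! for an integer n
  (an integer; the division is exact).\<close>

definition ibinom :: "int \<Rightarrow> nat \<Rightarrow> int" where
  "ibinom n r = (\<Prod>i<r. n - int i) div fact r"

definition lie_algebra_with_form ::
  "('k::field \<Rightarrow> 'g::ab_group_add \<Rightarrow> 'g) \<Rightarrow> ('g \<Rightarrow> 'g \<Rightarrow> 'g) \<Rightarrow> ('g \<Rightarrow> 'g \<Rightarrow> 'k) \<Rightarrow> bool" where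
  "lie_algebra_with_form scale br B \<longleftrightarrow>
     vector_space scale
   \<and> (\<forall>x y z. br (x + y) z = br x z + br y z)
   \<and> (\<forall>x y z. br x (y + z) = br x y + br x z)
   \<and> (\<forall>c x y. br (scale c x) y = scale c (br x y))
   \<and> (\<forall>c x y. br x (scale c y) = scale c (br x y))
   \<and> (\<forall>x. br x x = 0)
   \<and> (\<forall>x y z. br x (br y z) + br y (br z x) + br z (br x y) = 0)
   \<and> (\<forall>x y z. B (x + y) z = B x z + B y z)
   \<and> (\<forall>x y z. B x (y + z) = B x y + B x z)
   \<and> (\<forall>c x y. B (scale c x) y = c * B x y)
   \<and> (\<forall>c x y. B x (scale c y) = c * B x y)
   \<and> (\<forall>x y. B x y = B y x)
   \<and> (\<forall>x y z. B (br x y) z = B x (br y z))"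

text \<open>Elements of the affine algebra g-hat = g \<otimes> F[t,t^-1] \<oplus> F k: a pair (f, c) with
  f :: int \<Rightarrow> g finitely supported (f n is the coefficient of t^n) and c the coefficient of k.\<close>

type_synonym ('g, 'k) aff = "(int \<Rightarrow> 'g) \<times> 'k"

definition aff_carrier :: "('g::zero, 'k) aff set" where
  "aff_carrier = {x. finite {m. fst x m \<noteq> 0}}"

definition aff_zero :: "('g::zero, 'k::zero) aff" where
  "aff_zero = (\<lambda>_. 0, 0)"

definition aff_add :: "('g::plus, 'k::plus) aff \<Rightarrow> ('g, 'k) aff \<Rightarrow> ('g, 'k) aff" where
  "aff_add x y = (\<lambda>m. fst x m + fst y m, snd x + snd y)"

definition aff_scale :: "('k \<Rightarrow> 'g \<Rightarrow> 'g) \<Rightarrow> 'k::times \<Rightarrow> ('g, 'k) aff \<Rightarrow> ('g, 'k) aff" where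
  "aff_scale scale c x = (\<lambda>m. scale c (fst x m), c * snd x)"

definition aff_sum :: "'i set \<Rightarrow> ('i \<Rightarrow> ('g::comm_monoid_add, 'k::comm_monoid_add) aff) \<Rightarrow> ('g, 'k) aff" where
  "aff_sum S f = (\<lambda>m. \<Sum>s\<in>S. fst (f s) m, \<Sum>s\<in>S. snd (f s))"

definition aff_k :: "('g::zero, 'k::one) aff" where
  "aff_k = (\<lambda>_. 0, 1)"

definition aff_loop :: "'g::zero \<Rightarrow> int \<Rightarrow> ('g, 'k::zero) aff" where
  "aff_loop a n = (\<lambda>m. if m = n then a else 0, 0)"

definition aff_bracket ::
  "('g::{zero,comm_monoid_add} \<Rightarrow> 'g \<Rightarrow> 'g) \<Rightarrow> ('g \<Rightarrow> 'g \<Rightarrow> 'k::ring_1)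
   \<Rightarrow> ('g, 'k) aff \<Rightarrow> ('g, 'k) aff \<Rightarrow> ('g, 'k) aff" where
  "aff_bracket br B x y =
     (\<lambda>m. \<Sum>i\<in>{i. fst x i \<noteq> 0}. br (fst x i) (fst y (m - i)),
      \<Sum>i\<in>{i. fst x i \<noteq> 0}. of_int i * B (fst x i) (fst y (- i)))"

end

(* Model U(sl_2) over Q by its action on the irreducible modules V(N) and obtain the action on
   the loop algebra by extrapolation. In V(2N) let the basis vector v_(N-n) stand for t^n. Along
   a fixed diagonal, the entries of an element of the Kostant form are, for large N, a polynomial
   in N, and the value of this polynomial at N = 0 is an integer; these values form the matrix of
   the action on g \<otimes> F[t, t^-1], and the entry on the trivial module V(0) gives the action
   on k. Since the elements are banded, a diagonal of a product is a finite convolution of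
   diagonals of the factors, so extrapolation is multiplicative. The divided powers act by
   weighted shifts with binomial weights, for which the module Lie algebra condition reduces to
   the Vandermonde identity, plus the absorption identity (a - s) binom(a, s) = a binom(a - 1, s)
   for the central term. Nothing about the characteristic of F is used. *)

theory Submission
  imports Defs "HOL-Computational_Algebra.Formal_Power_Series" "HOL.Binomial_Plus"
begin

section \<open>Binomial coefficients\<close>

lemma of_int_ibinom: "(of_int (ibinom n r) :: 'a::field_char_0) = of_int n gchoose r"
  using of_int_gbinomial[of n r] gbinomial_prod_rev[of n r] by (simp add: ibinom_def atLeast0LessThan)

lemma of_int_gchoose_Ints: "(of_int n :: 'a::field_char_0) gchoose r \<in> \<int>"
  by (metis Ints_of_int of_int_ibinom)

lemma ibinom_vandermonde: "ibinom (a + b) r = (\<Sum>s\<le>r. ibinom a s * ibinom b (r - s))"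
proof -
  have "(of_int (ibinom (a + b) r) :: rat) = of_int (\<Sum>s\<le>r. ibinom a s * ibinom b (r - s))"
    using gbinomial_Vandermonde[of "of_int a :: rat" "of_int b" r]
    by (simp add: of_int_ibinom atLeast0AtMost)
  then show ?thesis by (simp only: of_int_eq_iff)
qed

lemma ibinom_absorb_comp: "(a - int s) * ibinom a s = a * ibinom (a - 1) s"
proof -
  have "(of_int ((a - int s) * ibinom a s) :: rat) = of_int (a * ibinom (a - 1) s)"
    using gbinomial_absorb_comp[of "of_int a :: rat" s] by (simp add: of_int_ibinom)
  then show ?thesis by (simp only: of_int_eq_iff)
qed

lemma ibinom_0 [simp]: "ibinom a 0 = 1"
  by (simp add: ibinom_def)

lemma ibinom_eq_0:
  assumes "0 \<le> a" "a < int r"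
  shows "ibinom a r = 0"
proof -
  have "nat a \<in> {..<r}" "a - int (nat a) = 0" using assms by auto
  then have P: "(\<Prod>i<r. a - int i) = 0" by (metis finite_lessThan prod_zero_iff)
  show ?thesis unfolding ibinom_def P by simp
qed

lemma ibinom_0_left: "ibinom 0 r = (if r = 0 then 1 else 0)"
  by (simp add: ibinom_eq_0)

lemma ibinom_sign_convolution:
  "(-1) ^ r * ibinom (p + q) r = (\<Sum>s\<le>r. ((-1) ^ s * ibinom p s) * ((-1) ^ (r - s) * ibinom q (r - s)))"
proof -
  have "(-1::int) ^ s * (-1) ^ (r - s) = (-1) ^ r" if "s \<le> r" for s
    using that by (simp flip: power_add)
  then show ?thesis
    by (auto simp: ibinom_vandermonde sum_distrib_left mult_ac intro!: sum.cong)
qed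

lemma ibinom_sign_central:
  "(\<Sum>s\<le>r. (p - int s) * ((-1) ^ s * ibinom p s * ((-1) ^ (r - s) * ibinom (int r - p) (r - s))))
     = (if r = 0 then p else 0)"
proof -
  have "(\<Sum>s\<le>r. (p - int s) * ((-1) ^ s * ibinom p s * ((-1) ^ (r - s) * ibinom (int r - p) (r - s))))
      = (\<Sum>s\<le>r. (-1) ^ r * p * (ibinom (p - 1) s * ibinom (int r - p) (r - s)))"
  proof (rule sum.cong[OF refl])
    fix s assume "s \<in> {..r}"
    then have sign: "(-1::int) ^ s * (-1) ^ (r - s) = (-1) ^ r" by (simp flip: power_add)
    have "(p - int s) * ((-1) ^ s * ibinom p s * ((-1) ^ (r - s) * ibinom (int r - p) (r - s)))
        = ((-1) ^ s * (-1) ^ (r - s)) * (((p - int s) * ibinom p s) * ibinom (int r - p) (r - s))"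
      by (simp only: mult_ac)
    also have "\<dots> = (-1) ^ r * p * (ibinom (p - 1) s * ibinom (int r - p) (r - s))"
      unfolding sign ibinom_absorb_comp by (simp only: mult_ac)
    finally show "(p - int s) * ((-1) ^ s * ibinom p s * ((-1) ^ (r - s) * ibinom (int r - p) (r - s)))
        = (-1) ^ r * p * (ibinom (p - 1) s * ibinom (int r - p) (r - s))" .
  qed
  also have "\<dots> = (-1) ^ r * p * ibinom (int r - 1) r"
    using ibinom_vandermonde[of "p - 1" "int r - p" r] by (simp add: sum_distrib_left)
  finally show ?thesis by (simp add: ibinom_eq_0)
qed

lemma ibinom_neg_central:
  "(\<Sum>s\<le>r. (p + int s) * (ibinom (- p) s * ibinom (p + int r) (r - s))) = (if r = 0 then p else 0)"
proof -
  have "(\<Sum>s\<le>r. (p + int s) * (ibinom (- p) s * ibinom (p + int r) (r - s)))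
      = (\<Sum>s\<le>r. p * (ibinom (- p - 1) s * ibinom (p + int r) (r - s)))"
  proof (rule sum.cong[OF refl])
    fix s
    have "(p + int s) * ibinom (- p) s = - ((- p - int s) * ibinom (- p) s)" by (simp add: algebra_simps)
    also have "\<dots> = p * ibinom (- p - 1) s" using ibinom_absorb_comp[of "- p" s] by simp
    finally show "(p + int s) * (ibinom (- p) s * ibinom (p + int r) (r - s))
        = p * (ibinom (- p - 1) s * ibinom (p + int r) (r - s))" by simp
  qed
  also have "\<dots> = p * ibinom (int r - 1) r"
    using ibinom_vandermonde[of "- p - 1" "p + int r" r] by (simp add: sum_distrib_left)
  finally show ?thesis by (simp add: ibinom_eq_0)
qed

lemma ibinom_double_central:
  "(\<Sum>s\<le>r. p * (ibinom (2 * p) s * ibinom (- (2 * p)) (r - s))) = (if r = 0 then p else 0)"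
  using ibinom_vandermonde[of "2 * p" "- (2 * p)" r, symmetric]
  by (simp add: sum_distrib_left[symmetric] ibinom_0_left)

lemma sum_mult_if_eq:
  "(\<Sum>z\<le>(N::nat). f z * (if z = c then b else 0)) = (if c \<le> N then f c * b else (0::rat))"
  by (simp add: if_distrib[of "\<lambda>v. f _ * v"] cong: if_cong)

lemma L_1_entry: "L_1 N x y = (if y = x + 1 \<and> y \<le> N then of_nat y else 0)"
  by (auto simp: L_1_def sl2_e_def)

lemma L_m1_entry: "L_m1 N x y = (if x = y + 1 \<and> x \<le> N then of_nat y - of_nat N else 0)"
  by (auto simp: L_m1_def sl2_f_def uscale_def)

lemma neg2_L_0_entry:
  "uscale (-2) L_0 N x y = (if x = y \<and> x \<le> N then of_nat N - 2 * of_nat x else 0)"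
  by (auto simp: L_0_def sl2_h_def uscale_def)

lemma upow_L_1_entry:
  "upow L_1 r N x y = (if y = x + r \<and> y \<le> N then (\<Prod>i<r. of_nat y - of_nat i) else 0)"
proof (induction r arbitrary: y)
  case 0 then show ?case by (auto simp: uone_def)
next
  case (Suc r)
  have "upow L_1 (Suc r) N x y
      = (\<Sum>z\<le>N. upow L_1 r N x z * (if z = y - 1 then (if 0 < y \<and> y \<le> N then of_nat y else 0) else 0))"
    unfolding upow.simps umult_def by (rule sum.cong) (auto simp: L_1_entry)
  also have "\<dots> = (if y - 1 \<le> N
      then upow L_1 r N x (y - 1) * (if 0 < y \<and> y \<le> N then of_nat y else 0) else 0)"
    by (rule sum_mult_if_eq)
  also have "\<dots> = (if y = x + Suc r \<and> y \<le> N then (\<Prod>i<Suc r. of_nat y - of_nat i) else 0)"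
  proof (cases y)
    case (Suc w)
    have "(\<Prod>i<Suc r. of_nat (Suc w) - of_nat i) = (\<Prod>i<r. of_nat w - of_nat i) * (of_nat (Suc w) :: rat)"
      by (simp only: prod.lessThan_Suc_shift) (simp add: algebra_simps)
    then show ?thesis using Suc.IH[of w] Suc by auto
  qed simp
  finally show ?case .
qed

lemma upow_L_m1_entry:
  "upow L_m1 r N x y = (if x = y + r \<and> x \<le> N then (\<Prod>i<r. of_nat y + of_nat i - of_nat N) else 0)"
proof (induction r arbitrary: y)
  case 0 then show ?case by (auto simp: uone_def)
next
  case (Suc r)
  have "upow L_m1 (Suc r) N x y
      = (\<Sum>z\<le>N. upow L_m1 r N x z *
           (if z = y + 1 then (if y + 1 \<le> N then of_nat y - of_nat N else 0) else 0))"
    unfolding upow.simps umult_def by (rule sum.cong) (auto simp: L_m1_entry)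
  also have "\<dots> = (if y + 1 \<le> N
      then upow L_m1 r N x (y + 1) * (if y + 1 \<le> N then of_nat y - of_nat N else 0) else 0)"
    by (rule sum_mult_if_eq)
  also have "\<dots> = (if x = y + Suc r \<and> x \<le> N then (\<Prod>i<Suc r. of_nat y + of_nat i - of_nat N) else 0)"
    using Suc.IH[of "y + 1"] by (auto simp only: prod.lessThan_Suc_shift) (auto simp: algebra_simps)
  finally show ?case .
qed

lemma ufall_diagonal_entry:
  assumes H: "\<And>N x y. H N x y = (if x = y \<and> x \<le> N then h N x else 0)"
  shows "ufall H r N x y = (if x = y \<and> x \<le> N then (\<Prod>i<r. h N x - of_nat i) else 0)"
proof (induction r arbitrary: y)
  case 0 then show ?case by (auto simp: uone_def)
next
  case (Suc r)
  have "ufall H (Suc r) N x y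
      = (\<Sum>z\<le>N. ufall H r N x z * (if z = y then (if y \<le> N then h N y - of_nat r else 0) else 0))"
    unfolding ufall.simps umult_def by (rule sum.cong) (auto simp: uadd_def uscale_def H uone_def)
  also have "\<dots> = (if y \<le> N then ufall H r N x y * (if y \<le> N then h N y - of_nat r else 0) else 0)"
    by (rule sum_mult_if_eq)
  also have "\<dots> = (if x = y \<and> x \<le> N then (\<Prod>i<Suc r. h N x - of_nat i) else 0)"
    using Suc.IH[of y] by (auto simp: algebra_simps)
  finally show ?case .
qed

lemma L_1_div_entry:
  "L_1_div r N x y = (if y = x + r \<and> y \<le> N then of_nat y gchoose r else 0)"
  by (simp add: L_1_div_def uscale_def upow_L_1_entry gbinomial_prod_rev atLeast0LessThan)

lemma L_m1_div_entry:
  "L_m1_div r N x y = (if x = y + r \<and> x \<le> N then pochhammer (of_nat y - of_nat N) r / fact r else 0)"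
  by (simp add: L_m1_div_def uscale_def upow_L_m1_entry pochhammer_prod atLeast0LessThan algebra_simps)

lemma L_0_div_entry:
  "L_0_div r N x y = (if x = y \<and> x \<le> N then (of_nat N - 2 * of_nat x) gchoose r else 0)"
  by (simp add: L_0_div_def uscale_def[of "1 / fact r"] ufall_diagonal_entry[OF neg2_L_0_entry]
      gbinomial_prod_rev atLeast0LessThan)

section \<open>Extrapolating matrix entries to the loop module\<close>

definition diag_entry :: "U \<Rightarrow> int \<Rightarrow> int \<Rightarrow> nat \<Rightarrow> rat" where
  "diag_entry u d m N = u (2 * N) (nat (m + int N + d)) (nat (m + int N))"

definition eventually_poly :: "(nat \<Rightarrow> rat) \<Rightarrow> rat poly \<Rightarrow> bool" where
  "eventually_poly f p \<longleftrightarrow> (\<forall>\<^sub>F t in sequentially. f t = poly p (of_nat t))"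

definition diag_poly :: "U \<Rightarrow> int \<Rightarrow> int \<Rightarrow> rat poly" where
  "diag_poly u d m = (SOME p. eventually_poly (diag_entry u d m) p)"

definition extrapolated_entry :: "U \<Rightarrow> int \<Rightarrow> int \<Rightarrow> rat" where
  "extrapolated_entry u d m = poly (diag_poly u d m) 0"

definition banded :: "int \<Rightarrow> U \<Rightarrow> bool" where
  "banded D u \<longleftrightarrow> (\<forall>N x y. D < \<bar>int x - int y\<bar> \<longrightarrow> u N x y = 0)"

definition admissible :: "U \<Rightarrow> bool" where
  "admissible u \<longleftrightarrow> (\<exists>D\<ge>0. banded D u) \<and> (\<forall>d m. \<exists>p. eventually_poly (diag_entry u d m) p)
     \<and> (\<forall>d m. extrapolated_entry u d m \<in> \<int>) \<and> u 0 0 0 \<in> \<int>"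

lemma eventually_poly_unique:
  assumes "eventually_poly f p" "eventually_poly f q"
  shows "p = q"
proof (rule ccontr)
  assume "p \<noteq> q"
  then have "finite {x. poly (p - q) x = 0}" by (intro poly_roots_finite) simp
  moreover have "\<forall>\<^sub>F t in sequentially. poly (p - q) (of_nat t) = 0"
    using assms unfolding eventually_poly_def by eventually_elim simp
  then obtain T where "\<forall>t\<ge>T. poly (p - q) (of_nat t) = 0"
    by (auto simp: eventually_sequentially)
  then have "(of_nat :: nat \<Rightarrow> rat) ` {T..} \<subseteq> {x. poly (p - q) x = 0}" by auto
  ultimately have "finite ((of_nat :: nat \<Rightarrow> rat) ` {T..})" by (rule finite_subset[rotated])
  then show False by (simp add: finite_image_iff infinite_Ici)
qed

lemma eventually_poly_cong:
  assumes "eventually_poly g p" "\<forall>\<^sub>F t in sequentially. f t = g t"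
  shows "eventually_poly f p"
  using assms unfolding eventually_poly_def by eventually_elim simp

lemma eventually_poly_add:
  assumes "eventually_poly f p" "eventually_poly g q"
  shows "eventually_poly (\<lambda>t. f t + g t) (p + q)"
  using assms unfolding eventually_poly_def by eventually_elim simp

lemma eventually_poly_mult:
  assumes "eventually_poly f p" "eventually_poly g q"
  shows "eventually_poly (\<lambda>t. f t * g t) (p * q)"
  using assms unfolding eventually_poly_def by eventually_elim simp

lemma eventually_poly_smult:
  assumes "eventually_poly f p"
  shows "eventually_poly (\<lambda>t. c * f t) (smult c p)"
  using assms unfolding eventually_poly_def by eventually_elim simp

lemma eventually_poly_sum:
  "(\<And>s. s \<in> S \<Longrightarrow> eventually_poly (f s) (p s)) \<Longrightarrow>
   eventually_poly (\<lambda>t. \<Sum>s\<in>S. f s t) (\<Sum>s\<in>S. p s)"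
proof (induction S rule: infinite_finite_induct)
  case (insert a S)
  then show ?case using eventually_poly_add[of "f a" "p a"] by simp
qed (simp_all add: eventually_poly_def)

lemma eventually_poly_diag_poly:
  "\<exists>p. eventually_poly (diag_entry u d m) p \<Longrightarrow> eventually_poly (diag_entry u d m) (diag_poly u d m)"
  unfolding diag_poly_def by (rule someI_ex)

lemma extrapolated_entry_eq:
  "eventually_poly (diag_entry u d m) p \<Longrightarrow> extrapolated_entry u d m = poly p 0"
  unfolding extrapolated_entry_def
  by (metis eventually_poly_diag_poly eventually_poly_unique)

lemma admissible_eventually_poly:
  "admissible u \<Longrightarrow> eventually_poly (diag_entry u d m) (diag_poly u d m)"
  unfolding admissible_def by (blast intro: eventually_poly_diag_poly)

lemma admissibleI:
  assumes "banded D u" "0 \<le> D"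
    and "\<And>d m. eventually_poly (diag_entry u d m) (P d m)"
    and "\<And>d m. poly (P d m) 0 \<in> \<int>"
    and "u 0 0 0 \<in> \<int>"
  shows "admissible u"
proof -
  have "extrapolated_entry u d m = poly (P d m) 0" for d m
    using assms(3) by (rule extrapolated_entry_eq)
  then show ?thesis using assms unfolding admissible_def by metis
qed

lemma extrapolated_entry_banded:
  assumes "banded D u" "D < \<bar>d\<bar>"
  shows "extrapolated_entry u d m = 0"
proof -
  have "eventually_poly (diag_entry u d m) 0"
    unfolding eventually_poly_def
  proof (rule eventually_sequentiallyI)
    fix t assume "nat (\<bar>m\<bar> + \<bar>d\<bar>) \<le> t"
    then have "\<bar>int (nat (m + int t + d)) - int (nat (m + int t))\<bar> = \<bar>d\<bar>" by auto
    then show "diag_entry u d m t = poly 0 (of_nat t)"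
      using assms by (auto simp: diag_entry_def banded_def)
  qed
  then show ?thesis by (simp add: extrapolated_entry_eq)
qed

lemma
  assumes "admissible u" "admissible v"
  shows admissible_uadd: "admissible (uadd u v)"
    and extrapolated_entry_uadd:
      "extrapolated_entry (uadd u v) d m = extrapolated_entry u d m + extrapolated_entry v d m"
proof -
  have P: "eventually_poly (diag_entry (uadd u v) d m) (diag_poly u d m + diag_poly v d m)" for d m
    using eventually_poly_add[OF assms[THEN admissible_eventually_poly, of d m]]
    by (simp add: diag_entry_def[abs_def] uadd_def)
  then show "extrapolated_entry (uadd u v) d m = extrapolated_entry u d m + extrapolated_entry v d m"
    by (simp add: extrapolated_entry_eq[OF P] extrapolated_entry_def[of u] extrapolated_entry_def[of v])
  obtain D1 D2 where "banded D1 u" "banded D2 v" "0 \<le> D1" "0 \<le> D2"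
    using assms by (auto simp: admissible_def)
  then have "banded (max D1 D2) (uadd u v)" "0 \<le> max D1 D2"
    by (auto simp: banded_def uadd_def)
  then show "admissible (uadd u v)"
    using P assms
    by (intro admissibleI[where P="\<lambda>d m. diag_poly u d m + diag_poly v d m"])
       (auto simp: admissible_def extrapolated_entry_def uadd_def)
qed

lemma admissible_uscale:
  assumes "admissible u" "c \<in> \<int>"
  shows "admissible (uscale c u)"
proof -
  have P: "eventually_poly (diag_entry (uscale c u) d m) (smult c (diag_poly u d m))" for d m
    using eventually_poly_smult[OF admissible_eventually_poly[OF assms(1), of d m]]
    by (simp add: diag_entry_def[abs_def] uscale_def)
  obtain D where "banded D u" "0 \<le> D" using assms by (auto simp: admissible_def)
  then have "banded D (uscale c u)" "0 \<le> D" by (auto simp: banded_def uscale_def)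
  then show ?thesis
    using P assms
    by (intro admissibleI[where P="\<lambda>d m. smult c (diag_poly u d m)"])
       (auto simp: admissible_def extrapolated_entry_def uscale_def)
qed

lemma admissible_usum:
  "finite S \<Longrightarrow> (\<And>s. s \<in> S \<Longrightarrow> admissible (f s)) \<Longrightarrow> admissible (usum S f)"
proof (induction S rule: finite_induct)
  case empty
  have "banded 0 (usum {} f)" by (simp add: banded_def usum_def)
  then show ?case
    by (rule admissibleI[where P="\<lambda>_ _. 0"]) (simp_all add: usum_def eventually_poly_def diag_entry_def)
next
  case (insert a S)
  have "usum (insert a S) f = uadd (f a) (usum S f)"
    using insert by (simp add: usum_def uadd_def)
  then show ?case using insert admissible_uadd by auto
qed

lemma diag_entry_umult:
  assumes v: "banded D v" and D: "0 \<le> D"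
  shows "\<forall>\<^sub>F t in sequentially.
    diag_entry (umult u v) d m t = (\<Sum>e\<in>{-D..D}. diag_entry u (d - e) (m + e) t * diag_entry v e m t)"
proof (rule eventually_sequentiallyI)
  fix t assume t: "nat (\<bar>m\<bar> + D) \<le> t"
  define g where "g e = nat (m + int t + e)" for e
  define X where "X = nat (m + int t + d)"
  define Y where "Y = nat (m + int t)"
  have Y: "int Y = m + int t" using t D by (simp add: Y_def)
  have inj: "inj_on g {-D..D}" using t by (auto simp: inj_on_def g_def)
  have "diag_entry (umult u v) d m t = (\<Sum>z\<le>2*t. u (2*t) X z * v (2*t) z Y)"
    by (simp add: diag_entry_def umult_def X_def Y_def)
  also have "\<dots> = (\<Sum>z\<in>g ` {-D..D}. u (2*t) X z * v (2*t) z Y)"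
  proof (rule sum.mono_neutral_right)
    show "g ` {-D..D} \<subseteq> {..2*t}" using t by (auto simp: g_def)
    show "\<forall>z\<in>{..2*t} - g ` {-D..D}. u (2*t) X z * v (2*t) z Y = 0"
    proof
      fix z assume z: "z \<in> {..2*t} - g ` {-D..D}"
      have "D < \<bar>int z - int Y\<bar>"
      proof (rule ccontr)
        assume "\<not> D < \<bar>int z - int Y\<bar>"
        then have "int z - int Y \<in> {-D..D}" by auto
        moreover have "g (int z - int Y) = z" using Y by (simp add: g_def)
        ultimately show False using z by (metis DiffD2 imageI)
      qed
      then show "u (2*t) X z * v (2*t) z Y = 0" using v by (simp add: banded_def)
    qed
  qed simp
  also have "\<dots> = (\<Sum>e\<in>{-D..D}. u (2*t) X (g e) * v (2*t) (g e) Y)"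
    by (rule sum.reindex_cong[OF inj refl]) simp
  also have "\<dots> = (\<Sum>e\<in>{-D..D}. diag_entry u (d - e) (m + e) t * diag_entry v e m t)"
    by (simp add: diag_entry_def X_def Y_def g_def algebra_simps)
  finally show "diag_entry (umult u v) d m t
      = (\<Sum>e\<in>{-D..D}. diag_entry u (d - e) (m + e) t * diag_entry v e m t)" .
qed

lemma extrapolated_entry_umult:
  assumes "admissible u" "admissible v" "banded D v" "0 \<le> D"
  shows "eventually_poly (diag_entry (umult u v) d m)
           (\<Sum>e\<in>{-D..D}. diag_poly u (d - e) (m + e) * diag_poly v e m)"
    and "extrapolated_entry (umult u v) d m
           = (\<Sum>e\<in>{-D..D}. extrapolated_entry u (d - e) (m + e) * extrapolated_entry v e m)"
proof -
  show P: "eventually_poly (diag_entry (umult u v) d m)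
      (\<Sum>e\<in>{-D..D}. diag_poly u (d - e) (m + e) * diag_poly v e m)"
    by (rule eventually_poly_cong[OF eventually_poly_sum diag_entry_umult[OF assms(3,4)]])
       (intro eventually_poly_mult admissible_eventually_poly assms(1,2))
  show "extrapolated_entry (umult u v) d m
      = (\<Sum>e\<in>{-D..D}. extrapolated_entry u (d - e) (m + e) * extrapolated_entry v e m)"
    unfolding extrapolated_entry_eq[OF P] by (simp add: poly_sum extrapolated_entry_def)
qed

lemma admissible_umult:
  assumes "admissible u" "admissible v"
  shows "admissible (umult u v)"
proof -
  obtain Du Dv where u: "banded Du u" "0 \<le> Du" and v: "banded Dv v" "0 \<le> Dv"
    using assms by (auto simp: admissible_def)
  have "0 \<le> Du + Dv" using u v by simp
  moreover have "banded (Du + Dv) (umult u v)"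
    unfolding banded_def umult_def
  proof (intro allI impI sum.neutral ballI)
    fix N x y z assume "Du + Dv < \<bar>int x - int y\<bar>"
    then have "Du < \<bar>int x - int z\<bar> \<or> Dv < \<bar>int z - int y\<bar>" by auto
    then show "u N x z * v N z y = 0" using u v by (auto simp: banded_def)
  qed
  moreover have "extrapolated_entry (umult u v) d m \<in> \<int>" for d m
    using extrapolated_entry_umult(2)[OF assms v] assms
    by (auto simp: admissible_def intro!: Ints_mult)
  moreover have "umult u v 0 0 0 \<in> \<int>" using assms by (auto simp: admissible_def umult_def)
  ultimately show ?thesis
    using extrapolated_entry_umult(1)[OF assms v] unfolding admissible_def by blast
qed

definition gchoose_poly :: "int \<Rightarrow> nat \<Rightarrow> rat poly" where
  "gchoose_poly c r = smult (1 / fact r) (\<Prod>i<r. [:of_int c - of_nat i, 1:])"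

lemma poly_gchoose_poly: "poly (gchoose_poly c r) x = (of_int c + x) gchoose r"
  by (simp add: gchoose_poly_def poly_prod gbinomial_prod_rev atLeast0LessThan algebra_simps)

lemma diag_indices:
  assumes "nat (\<bar>m\<bar> + \<bar>d\<bar>) \<le> t"
  shows "int (nat (m + int t + d)) = m + int t + d" "int (nat (m + int t)) = m + int t"
    "(of_nat (nat (m + int t)) :: 'a::ring_1) = of_int m + of_nat t"
    "nat (m + int t) \<le> 2 * t" "nat (m + int t + d) \<le> 2 * t"
  using assms by auto

lemma eventually_poly_L_1_div:
  "eventually_poly (diag_entry (L_1_div r) d m) (if d = - int r then gchoose_poly m r else 0)"
  unfolding eventually_poly_def
proof (rule eventually_sequentiallyI)
  fix t assume t: "nat (\<bar>m\<bar> + \<bar>d\<bar>) \<le> t"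
  note ix = diag_indices[OF t]
  have "nat (m + int t) = nat (m + int t + d) + r \<longleftrightarrow> d = - int r" using ix(1,2) by linarith
  then show "diag_entry (L_1_div r) d m t
      = poly (if d = - int r then gchoose_poly m r else 0) (of_nat t)"
    using ix(4) by (simp add: diag_entry_def L_1_div_entry poly_gchoose_poly ix(3))
qed

lemma eventually_poly_L_m1_div:
  "eventually_poly (diag_entry (L_m1_div r) d m)
     (if d = int r then smult ((-1) ^ r) (gchoose_poly (- m) r) else 0)"
  unfolding eventually_poly_def
proof (rule eventually_sequentiallyI)
  fix t assume t: "nat (\<bar>m\<bar> + \<bar>d\<bar>) \<le> t"
  note ix = diag_indices[OF t]
  have "nat (m + int t + d) = nat (m + int t) + r \<longleftrightarrow> d = int r" using ix(1,2) by linarith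
  moreover have "pochhammer (of_int m + of_nat t - of_nat (2 * t)) r / fact r
      = (-1) ^ r * ((of_int (- m) + of_nat t) gchoose r :: rat)"
    by (simp add: gbinomial_pochhammer)
  ultimately show "diag_entry (L_m1_div r) d m t
      = poly (if d = int r then smult ((-1) ^ r) (gchoose_poly (- m) r) else 0) (of_nat t)"
    using ix(5) by (simp add: diag_entry_def L_m1_div_entry poly_gchoose_poly ix(3))
qed

lemma eventually_poly_L_0_div:
  "eventually_poly (diag_entry (L_0_div r) d m) [:if d = 0 then of_int (- 2 * m) gchoose r else 0:]"
  unfolding eventually_poly_def
proof (rule eventually_sequentiallyI)
  fix t assume t: "nat (\<bar>m\<bar> + \<bar>d\<bar>) \<le> t"
  note ix = diag_indices[OF t]
  have "nat (m + int t + d) = nat (m + int t) \<longleftrightarrow> d = 0" using ix(1,2) by linarith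
  then show "diag_entry (L_0_div r) d m t
      = poly [:if d = 0 then of_int (- 2 * m) gchoose r else 0:] (of_nat t)"
    using ix(4) by (simp add: diag_entry_def L_0_div_entry ix(3) algebra_simps)
qed

lemma extrapolated_entry_L_1_div:
  "extrapolated_entry (L_1_div r) d m = (if d = - int r then of_int (ibinom m r) else 0)"
  by (simp add: extrapolated_entry_eq[OF eventually_poly_L_1_div] poly_gchoose_poly of_int_ibinom)

lemma extrapolated_entry_L_m1_div:
  "extrapolated_entry (L_m1_div r) d m = (if d = int r then of_int ((-1) ^ r * ibinom (- m) r) else 0)"
  by (simp add: extrapolated_entry_eq[OF eventually_poly_L_m1_div] poly_gchoose_poly of_int_ibinom)

lemma extrapolated_entry_L_0_div:
  "extrapolated_entry (L_0_div r) d m = (if d = 0 then of_int (ibinom (- 2 * m) r) else 0)"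
  by (simp add: extrapolated_entry_eq[OF eventually_poly_L_0_div] of_int_ibinom)

lemma admissible_L_1_div: "admissible (L_1_div r)"
proof (rule admissibleI[OF _ _ eventually_poly_L_1_div])
  show "banded (int r) (L_1_div r)" by (auto simp: banded_def L_1_div_entry)
qed (simp_all add: poly_gchoose_poly of_int_gchoose_Ints L_1_div_entry)

lemma admissible_L_m1_div: "admissible (L_m1_div r)"
proof (rule admissibleI[OF _ _ eventually_poly_L_m1_div])
  show "banded (int r) (L_m1_div r)" by (auto simp: banded_def L_m1_div_entry)
qed (auto simp: poly_gchoose_poly of_int_gchoose_Ints L_m1_div_entry simp del: of_int_minus)

lemma admissible_L_0_div: "admissible (L_0_div r)"
proof (rule admissibleI[OF _ _ eventually_poly_L_0_div])
  show "banded 0 (L_0_div r)" by (auto simp: banded_def L_0_div_entry)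
qed (simp_all add: of_int_gchoose_Ints L_0_div_entry gbinomial_0_left del: of_int_minus of_int_mult)

lemma admissible_pbw: "admissible (pbw i j k)"
  by (simp add: pbw_def admissible_umult admissible_L_1_div admissible_L_m1_div admissible_L_0_div)

lemma admissible_UZ: "u \<in> UZ \<Longrightarrow> admissible u"
  unfolding UZ_def by (auto intro!: admissible_usum admissible_uscale admissible_pbw split: prod.splits)

lemma eventually_poly_uone: "eventually_poly (diag_entry uone d m) [:if d = 0 then 1 else 0:]"
  unfolding eventually_poly_def
  by (rule eventually_sequentiallyI[of "nat (\<bar>m\<bar> + \<bar>d\<bar>)"])
     (use diag_indices in \<open>auto simp: diag_entry_def uone_def\<close>)

lemma extrapolated_entry_uone: "extrapolated_entry uone d m = (if d = 0 then 1 else 0)"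
  by (simp add: extrapolated_entry_eq[OF eventually_poly_uone])

section \<open>The action on the loop module\<close>

(* the coefficient of t^n' in u (a t^n): row N - n', column N - n of V(2N) *)
definition loop_coeff :: "U \<Rightarrow> int \<Rightarrow> int \<Rightarrow> 'k::ring_1" where
  "loop_coeff u n' n = of_int \<lfloor>extrapolated_entry u (n - n') (- n)\<rfloor>"

definition loop_action ::
  "('k::ring_1 \<Rightarrow> 'g::ab_group_add \<Rightarrow> 'g) \<Rightarrow> U \<Rightarrow> ('g, 'k) aff \<Rightarrow> ('g, 'k) aff" where
  "loop_action sc u x =
     (\<lambda>n'. \<Sum>n\<in>{n. fst x n \<noteq> 0}. sc (loop_coeff u n' n) (fst x n), of_int \<lfloor>u 0 0 0\<rfloor> * snd x)"

lemma floor_add_Ints: "a \<in> \<int> \<Longrightarrow> b \<in> \<int> \<Longrightarrow> \<lfloor>a + b\<rfloor> = \<lfloor>a\<rfloor> + \<lfloor>(b::rat)\<rfloor>"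
  by (auto elim!: Ints_cases)

lemma floor_mult_Ints: "a \<in> \<int> \<Longrightarrow> b \<in> \<int> \<Longrightarrow> \<lfloor>a * b\<rfloor> = \<lfloor>a\<rfloor> * \<lfloor>(b::rat)\<rfloor>"
  by (auto elim!: Ints_cases simp flip: of_int_mult)

lemma floor_sum_Ints: "(\<And>i. i \<in> S \<Longrightarrow> a i \<in> \<int>) \<Longrightarrow> \<lfloor>\<Sum>i\<in>S. a i\<rfloor> = (\<Sum>i\<in>S. \<lfloor>(a i::rat)\<rfloor>)"
proof (induction S rule: infinite_finite_induct)
  case (insert x F)
  then show ?case by (simp add: floor_add_Ints Ints_sum)
qed auto

lemma loop_coeff_banded: "banded D u \<Longrightarrow> D < \<bar>n - n'\<bar> \<Longrightarrow> loop_coeff u n' n = 0"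
  by (simp add: loop_coeff_def extrapolated_entry_banded)

lemma loop_coeff_uadd:
  "admissible u \<Longrightarrow> admissible v \<Longrightarrow> loop_coeff (uadd u v) n' n = loop_coeff u n' n + loop_coeff v n' n"
  by (simp add: loop_coeff_def extrapolated_entry_uadd floor_add_Ints admissible_def)

lemma loop_coeff_uone: "loop_coeff uone n' n = (if n = n' then 1 else 0)"
  by (simp add: loop_coeff_def extrapolated_entry_uone)

lemma loop_coeff_umult:
  assumes "admissible u" "admissible v" "banded D v" "0 \<le> D" "finite S" "{n - D..n + D} \<subseteq> S"
  shows "loop_coeff (umult u v) n'' n = (\<Sum>n'\<in>S. loop_coeff u n'' n' * loop_coeff v n' n)"
proof -
  have Ints: "extrapolated_entry u d m \<in> \<int>" "extrapolated_entry v d m \<in> \<int>" for d m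
    using assms(1,2) by (auto simp: admissible_def)
  have "extrapolated_entry (umult u v) (n - n'') (- n)
      = (\<Sum>e\<in>{-D..D}. extrapolated_entry u (n - n'' - e) (- n + e) * extrapolated_entry v e (- n))"
    by (rule extrapolated_entry_umult(2)[OF assms(1-4)])
  also have "\<dots> = (\<Sum>n'\<in>{n - D..n + D}.
      extrapolated_entry u (n' - n'') (- n') * extrapolated_entry v (n - n') (- n))"
    by (rule sum.reindex_bij_witness[where i="\<lambda>n'. n - n'" and j="\<lambda>e. n - e"]) (auto simp: algebra_simps)
  finally have "loop_coeff (umult u v) n'' n
      = (\<Sum>n'\<in>{n - D..n + D}. loop_coeff u n'' n' * loop_coeff v n' n)"
    by (simp add: loop_coeff_def floor_sum_Ints Ints floor_mult_Ints)
  also have "\<dots> = (\<Sum>n'\<in>S. loop_coeff u n'' n' * loop_coeff v n' n)"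
  proof (rule sum.mono_neutral_left[OF assms(5,6)], rule ballI)
    fix i assume "i \<in> S - {n - D..n + D}"
    then have "D < \<bar>n - i\<bar>" by auto
    then show "loop_coeff u n'' i * loop_coeff v i n = 0" by (simp add: loop_coeff_banded[OF assms(3)])
  qed
  finally show ?thesis .
qed

lemma aff_sum_carrier:
  assumes "finite S" "\<And>s. s \<in> S \<Longrightarrow> f s \<in> aff_carrier"
  shows "aff_sum S f \<in> aff_carrier"
proof -
  have "{m. fst (aff_sum S f) m \<noteq> 0} \<subseteq> (\<Union>s\<in>S. {m. fst (f s) m \<noteq> 0})"
    by (auto simp: aff_sum_def intro: ccontr dest: sum.neutral)
  moreover have "finite (\<Union>s\<in>S. {m. fst (f s) m \<noteq> 0})" using assms by (auto simp: aff_carrier_def)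
  ultimately show ?thesis by (simp add: aff_carrier_def finite_subset)
qed

lemma aff_sum_cong: "(\<And>s. s \<in> S \<Longrightarrow> f s = g s) \<Longrightarrow> aff_sum S f = aff_sum S g"
  by (simp add: aff_sum_def)

lemma sum_triple:
  "(\<Sum>c\<in>C. \<Sum>b\<in>B. \<Sum>a\<in>A. g a b c) = (\<Sum>(a, b, c)\<in>A \<times> B \<times> C. g a b c)"
proof -
  have "(\<Sum>(a, b, c)\<in>A \<times> B \<times> C. g a b c) = (\<Sum>a\<in>A. \<Sum>b\<in>B. \<Sum>c\<in>C. g a b c)"
    by (simp add: sum.cartesian_product split_def)
  also have "\<dots> = (\<Sum>b\<in>B. \<Sum>c\<in>C. \<Sum>a\<in>A. g a b c)"
    by (subst sum.swap) (simp add: sum.swap[of _ A])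
  also have "\<dots> = (\<Sum>c\<in>C. \<Sum>b\<in>B. \<Sum>a\<in>A. g a b c)" by (rule sum.swap)
  finally show ?thesis by simp
qed

lemma aff_sum_triple:
  "aff_sum {..k} (\<lambda>c. aff_sum {..j} (\<lambda>b. aff_sum {..i} (\<lambda>a. F a b c)))
   = aff_sum {(a, b, c). a \<le> i \<and> b \<le> j \<and> c \<le> k} (\<lambda>(a, b, c). F a b c)"
proof -
  have "{(a, b, c). a \<le> i \<and> b \<le> j \<and> c \<le> k} = {..i} \<times> {..j} \<times> {..k}" by auto
  then show ?thesis by (simp add: aff_sum_def sum_triple split_def)
qed

context vector_space
begin

lemma loop_action_fst:
  assumes "finite S" "{n. fst x n \<noteq> 0} \<subseteq> S"
  shows "fst (loop_action scale u x) n' = (\<Sum>n\<in>S. scale (loop_coeff u n' n) (fst x n))"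
  unfolding loop_action_def fst_conv by (rule sum.mono_neutral_left[OF assms]) auto

lemma loop_action_support:
  assumes "banded D u"
  shows "{n'. fst (loop_action scale u x) n' \<noteq> 0} \<subseteq> (\<Union>n\<in>{n. fst x n \<noteq> 0}. {n - D..n + D})"
proof
  fix n' assume "n' \<in> {n'. fst (loop_action scale u x) n' \<noteq> 0}"
  then have "(\<Sum>n\<in>{n. fst x n \<noteq> 0}. scale (loop_coeff u n' n) (fst x n)) \<noteq> 0"
    by (simp add: loop_action_def)
  then obtain n where n: "fst x n \<noteq> 0" "scale (loop_coeff u n' n) (fst x n) \<noteq> 0"
    using sum.neutral by force
  then have "(loop_coeff u n' n :: 'a) \<noteq> 0" by (metis scale_zero_left)
  then have "\<bar>n - n'\<bar> \<le> D" by (metis loop_coeff_banded[OF assms] not_le)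
  then show "n' \<in> (\<Union>n\<in>{n. fst x n \<noteq> 0}. {n - D..n + D})" using n(1) by auto
qed

lemma loop_action_carrier:
  assumes "admissible u" "x \<in> aff_carrier"
  shows "loop_action scale u x \<in> aff_carrier"
proof -
  obtain D where "banded D u" using assms(1) by (auto simp: admissible_def)
  then have "{n'. fst (loop_action scale u x) n' \<noteq> 0} \<subseteq> (\<Union>n\<in>{n. fst x n \<noteq> 0}. {n - D..n + D})"
    by (rule loop_action_support)
  moreover have "finite (\<Union>n\<in>{n. fst x n \<noteq> 0}. {n - D..n + D})"
    using assms(2) by (simp add: aff_carrier_def)
  ultimately show ?thesis by (simp add: aff_carrier_def finite_subset)
qed

lemma loop_action_add:
  assumes "x \<in> aff_carrier" "y \<in> aff_carrier"
  shows "loop_action scale u (aff_add x y) = aff_add (loop_action scale u x) (loop_action scale u y)"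
proof -
  let ?S = "{n. fst x n \<noteq> 0} \<union> {n. fst y n \<noteq> 0}"
  have S: "finite ?S" using assms by (simp add: aff_carrier_def)
  have "fst (loop_action scale u (aff_add x y)) n'
      = fst (loop_action scale u x) n' + fst (loop_action scale u y) n'" for n'
  proof -
    have "fst (loop_action scale u (aff_add x y)) n'
        = (\<Sum>n\<in>?S. scale (loop_coeff u n' n) (fst (aff_add x y) n))"
      by (rule loop_action_fst[OF S]) (auto simp: aff_add_def)
    also have "\<dots> = (\<Sum>n\<in>?S. scale (loop_coeff u n' n) (fst x n))
        + (\<Sum>n\<in>?S. scale (loop_coeff u n' n) (fst y n))"
      by (simp add: aff_add_def scale_right_distrib sum.distrib)
    also have "\<dots> = fst (loop_action scale u x) n' + fst (loop_action scale u y) n'"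
      by (simp add: loop_action_fst[OF S])
    finally show ?thesis .
  qed
  then show ?thesis by (auto simp: aff_add_def loop_action_def algebra_simps)
qed

lemma loop_action_scale:
  assumes "x \<in> aff_carrier"
  shows "loop_action scale u (aff_scale scale c x) = aff_scale scale c (loop_action scale u x)"
proof -
  let ?S = "{n. fst x n \<noteq> 0}"
  have S: "finite ?S" using assms by (simp add: aff_carrier_def)
  have "fst (loop_action scale u (aff_scale scale c x)) n' = scale c (fst (loop_action scale u x) n')"
    for n'
  proof -
    have "fst (loop_action scale u (aff_scale scale c x)) n'
        = (\<Sum>n\<in>?S. scale (loop_coeff u n' n) (fst (aff_scale scale c x) n))"
      by (rule loop_action_fst[OF S]) (auto simp: aff_scale_def)
    also have "\<dots> = scale c (fst (loop_action scale u x) n')"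
      by (simp add: aff_scale_def scale_sum_right mult.commute loop_action_fst[OF S])
    finally show ?thesis .
  qed
  then show ?thesis by (auto simp: aff_scale_def loop_action_def algebra_simps)
qed

lemma loop_action_uadd:
  assumes "admissible u" "admissible v"
  shows "loop_action scale (uadd u v) x = aff_add (loop_action scale u x) (loop_action scale v x)"
proof -
  have "\<lfloor>uadd u v 0 0 0\<rfloor> = \<lfloor>u 0 0 0\<rfloor> + \<lfloor>v 0 0 0\<rfloor>"
    using assms by (simp add: uadd_def admissible_def floor_add_Ints)
  then show ?thesis
    by (simp add: loop_action_def aff_add_def loop_coeff_uadd[OF assms] scale_left_distrib
        sum.distrib distrib_right)
qed

lemma loop_action_uone:
  assumes "x \<in> aff_carrier"
  shows "loop_action scale uone x = x"
proof -
  have "finite {n. fst x n \<noteq> 0}" using assms by (simp add: aff_carrier_def)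
  then have "(\<Sum>n\<in>{n. fst x n \<noteq> 0}. scale (loop_coeff uone n' n) (fst x n)) = fst x n'" for n'
    by (simp add: loop_coeff_uone if_distrib[of "\<lambda>c. scale c _"] cong: if_cong)
  then show ?thesis by (simp add: loop_action_def uone_def)
qed

lemma loop_action_umult:
  assumes "admissible u" "admissible v" "x \<in> aff_carrier"
  shows "loop_action scale (umult u v) x = loop_action scale u (loop_action scale v x)"
proof (rule prod_eqI)
  obtain D where D: "banded D v" "0 \<le> D" using assms(2) by (auto simp: admissible_def)
  let ?S = "{n. fst x n \<noteq> 0}"
  let ?S' = "\<Union>n\<in>?S. {n - D..n + D}"
  have S: "finite ?S" and S': "finite ?S'" using assms by (auto simp: aff_carrier_def)
  show "fst (loop_action scale (umult u v) x) = fst (loop_action scale u (loop_action scale v x))"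
  proof
    fix n''
    have "fst (loop_action scale u (loop_action scale v x)) n''
        = (\<Sum>n'\<in>?S'. scale (loop_coeff u n'' n') (\<Sum>n\<in>?S. scale (loop_coeff v n' n) (fst x n)))"
      by (simp add: loop_action_fst[OF S' loop_action_support[OF D(1)]] loop_action_fst[OF S])
    also have "\<dots> = (\<Sum>n'\<in>?S'. \<Sum>n\<in>?S. scale (loop_coeff u n'' n' * loop_coeff v n' n) (fst x n))"
      by (simp add: scale_sum_right)
    also have "\<dots> = (\<Sum>n\<in>?S. scale (\<Sum>n'\<in>?S'. loop_coeff u n'' n' * loop_coeff v n' n) (fst x n))"
      by (subst sum.swap) (simp add: scale_sum_left)
    also have "\<dots> = (\<Sum>n\<in>?S. scale (loop_coeff (umult u v) n'' n) (fst x n))"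
    proof (rule sum.cong[OF refl])
      fix n assume "n \<in> ?S"
      then have "{n - D..n + D} \<subseteq> ?S'" by blast
      then show "scale (\<Sum>n'\<in>?S'. loop_coeff u n'' n' * loop_coeff v n' n) (fst x n)
          = scale (loop_coeff (umult u v) n'' n) (fst x n)"
        by (simp add: loop_coeff_umult[OF assms(1,2) D S'])
    qed
    also have "\<dots> = fst (loop_action scale (umult u v) x) n''"
      by (simp add: loop_action_def)
    finally show "fst (loop_action scale (umult u v) x) n''
        = fst (loop_action scale u (loop_action scale v x)) n''"
      by simp
  qed
  show "snd (loop_action scale (umult u v) x) = snd (loop_action scale u (loop_action scale v x))"
    using assms by (simp add: loop_action_def umult_def admissible_def floor_mult_Ints)
qed

lemma loop_action_aff_sum:
  assumes "finite S" "\<And>s. s \<in> S \<Longrightarrow> f s \<in> aff_carrier"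
  shows "loop_action scale u (aff_sum S f) = aff_sum S (\<lambda>s. loop_action scale u (f s))"
  using assms
proof (induction S rule: finite_induct)
  case empty
  then show ?case by (simp add: loop_action_def aff_sum_def)
next
  case (insert a S)
  have "aff_sum (insert a S) g = aff_add (g a) (aff_sum S g)" for g :: "_ \<Rightarrow> ('b, 'a) aff"
    using insert by (simp add: aff_sum_def aff_add_def)
  moreover have "aff_sum S f \<in> aff_carrier" using insert by (intro aff_sum_carrier) auto
  ultimately show ?case using insert loop_action_add by simp
qed

end

section \<open>Weighted shifts and the Leibniz rule\<close>

definition weighted_shift ::
  "('k::times \<Rightarrow> 'g \<Rightarrow> 'g) \<Rightarrow> (int \<Rightarrow> 'k) \<Rightarrow> int \<Rightarrow> 'k \<Rightarrow> ('g, 'k) aff \<Rightarrow> ('g, 'k) aff" where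
  "weighted_shift sc c t e x = (\<lambda>n'. sc (c (n' + t)) (fst x (n' + t)), e * snd x)"

lemma fst_weighted_shift: "fst (weighted_shift sc c t e x) n' = sc (c (n' + t)) (fst x (n' + t))"
  by (simp add: weighted_shift_def)

lemma snd_weighted_shift: "snd (weighted_shift sc c t e x) = e * snd x"
  by (simp add: weighted_shift_def)

context vector_space
begin

lemma
  assumes "lie_algebra_with_form scale br B"
  shows bracket_scale: "br (scale a u) (scale b v) = scale (a * b) (br u v)"
    and bracket_zero_left: "br 0 v = 0"
    and bracket_zero_right: "br u 0 = 0"
    and form_scale: "B (scale a u) (scale b v) = a * b * B u v"
    and form_zero_left: "B 0 v = 0"
proof -
  have br: "br (scale c u) v = scale c (br u v)" "br u (scale c v) = scale c (br u v)"
    and form: "B (scale c u) v = c * B u v" for c u v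
    using assms by (simp_all add: lie_algebra_with_form_def)
  show "br (scale a u) (scale b v) = scale (a * b) (br u v)" "B (scale a u) (scale b v) = a * b * B u v"
    using assms by (simp_all add: br form lie_algebra_with_form_def)
  show "br 0 v = 0" "br u 0 = 0" "B 0 v = 0"
    using br(1)[of 0 0] br(2)[of _ 0 0] form[of 0 0] by simp_all
qed

lemma aff_bracket_carrier:
  assumes L: "lie_algebra_with_form scale br B" and x: "x \<in> aff_carrier" and y: "y \<in> aff_carrier"
  shows "aff_bracket br B x y \<in> aff_carrier"
proof -
  let ?S = "{n. fst x n \<noteq> 0}" and ?T = "{n. fst y n \<noteq> 0}"
  have "{m. fst (aff_bracket br B x y) m \<noteq> 0} \<subseteq> (\<lambda>(i, j). i + j) ` (?S \<times> ?T)"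
  proof
    fix m assume "m \<in> {m. fst (aff_bracket br B x y) m \<noteq> 0}"
    then have "(\<Sum>i\<in>?S. br (fst x i) (fst y (m - i))) \<noteq> 0" by (simp add: aff_bracket_def)
    then obtain i where i: "i \<in> ?S" "br (fst x i) (fst y (m - i)) \<noteq> 0"
      by (meson sum.neutral)
    then have "fst y (m - i) \<noteq> 0" using bracket_zero_right[OF L] by auto
    then show "m \<in> (\<lambda>(i, j). i + j) ` (?S \<times> ?T)" using i by (intro image_eqI[of _ _ "(i, m - i)"]) auto
  qed
  moreover have "finite ((\<lambda>(i, j). i + j) ` (?S \<times> ?T))" using x y by (simp add: aff_carrier_def)
  ultimately show ?thesis by (simp add: aff_carrier_def finite_subset)
qed

lemma weighted_shift_aff_k: "weighted_shift scale c t e aff_k = aff_scale scale e aff_k"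
  by (simp add: weighted_shift_def aff_scale_def aff_k_def)

lemma weighted_shift_aff_loop:
  "weighted_shift scale c t e (aff_loop a n) = aff_scale scale (c n) (aff_loop a (n - t))"
  by (auto simp: weighted_shift_def aff_scale_def aff_loop_def fun_eq_iff)

lemma sum_support_weighted_shift:
  assumes x: "x \<in> aff_carrier" and g: "\<And>i. fst (weighted_shift scale c t e x) i = 0 \<Longrightarrow> g i = 0"
  shows "(\<Sum>i\<in>{n. fst (weighted_shift scale c t e x) n \<noteq> 0}. g i) = (\<Sum>p\<in>{n. fst x n \<noteq> 0}. g (p - t))"
proof -
  let ?T = "(\<lambda>p. p - t) ` {n. fst x n \<noteq> 0}"
  have "finite ?T" using x by (simp add: aff_carrier_def)
  moreover have "{n. fst (weighted_shift scale c t e x) n \<noteq> 0} \<subseteq> ?T"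
  proof
    fix n assume "n \<in> {n. fst (weighted_shift scale c t e x) n \<noteq> 0}"
    then have "fst x (n + t) \<noteq> 0" by (auto simp: fst_weighted_shift)
    then show "n \<in> ?T" by (intro image_eqI[of _ _ "n + t"]) auto
  qed
  ultimately have "(\<Sum>i\<in>{n. fst (weighted_shift scale c t e x) n \<noteq> 0}. g i) = (\<Sum>i\<in>?T. g i)"
    by (intro sum.mono_neutral_left) (auto intro: g)
  also have "\<dots> = (\<Sum>p\<in>{n. fst x n \<noteq> 0}. g (p - t))"
    by (rule sum.reindex_cong[of "\<lambda>p. p - t"]) (auto simp: inj_on_def)
  finally show ?thesis .
qed

lemma fst_bracket_weighted_shift:
  assumes L: "lie_algebra_with_form scale br B" and x: "x \<in> aff_carrier"
  shows "fst (aff_bracket br B (weighted_shift scale c1 t1 e1 x) (weighted_shift scale c2 t2 e2 y)) n'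
    = (\<Sum>p\<in>{n. fst x n \<noteq> 0}.
         scale (c1 p * c2 (n' + t1 + t2 - p)) (br (fst x p) (fst y (n' + t1 + t2 - p))))"
proof -
  have "fst (aff_bracket br B (weighted_shift scale c1 t1 e1 x) (weighted_shift scale c2 t2 e2 y)) n'
      = (\<Sum>p\<in>{n. fst x n \<noteq> 0}. br (fst (weighted_shift scale c1 t1 e1 x) (p - t1))
                                     (fst (weighted_shift scale c2 t2 e2 y) (n' - (p - t1))))"
    unfolding aff_bracket_def fst_conv
    by (rule sum_support_weighted_shift[OF x]) (simp add: bracket_zero_left[OF L])
  also have "\<dots> = (\<Sum>p\<in>{n. fst x n \<noteq> 0}.
      scale (c1 p * c2 (n' + t1 + t2 - p)) (br (fst x p) (fst y (n' + t1 + t2 - p))))"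
  proof (rule sum.cong[OF refl])
    fix p
    have eq: "n' - (p - t1) + t2 = n' + t1 + t2 - p" by simp
    show "br (fst (weighted_shift scale c1 t1 e1 x) (p - t1))
            (fst (weighted_shift scale c2 t2 e2 y) (n' - (p - t1)))
        = scale (c1 p * c2 (n' + t1 + t2 - p)) (br (fst x p) (fst y (n' + t1 + t2 - p)))"
      unfolding fst_weighted_shift eq by (simp add: bracket_scale[OF L])
  qed
  finally show ?thesis .
qed

lemma snd_bracket_weighted_shift:
  assumes L: "lie_algebra_with_form scale br B" and x: "x \<in> aff_carrier"
  shows "snd (aff_bracket br B (weighted_shift scale c1 t1 e1 x) (weighted_shift scale c2 t2 e2 y))
    = (\<Sum>p\<in>{n. fst x n \<noteq> 0}.
         of_int (p - t1) * (c1 p * c2 (t1 + t2 - p)) * B (fst x p) (fst y (t1 + t2 - p)))"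
proof -
  have "snd (aff_bracket br B (weighted_shift scale c1 t1 e1 x) (weighted_shift scale c2 t2 e2 y))
      = (\<Sum>p\<in>{n. fst x n \<noteq> 0}. of_int (p - t1) * B (fst (weighted_shift scale c1 t1 e1 x) (p - t1))
                                     (fst (weighted_shift scale c2 t2 e2 y) (- (p - t1))))"
    unfolding aff_bracket_def snd_conv
    by (rule sum_support_weighted_shift[OF x]) (simp add: form_zero_left[OF L])
  also have "\<dots> = (\<Sum>p\<in>{n. fst x n \<noteq> 0}.
      of_int (p - t1) * (c1 p * c2 (t1 + t2 - p)) * B (fst x p) (fst y (t1 + t2 - p)))"
  proof (rule sum.cong[OF refl])
    fix p
    have eq: "- (p - t1) + t2 = t1 + t2 - p" by simp
    show "of_int (p - t1) * B (fst (weighted_shift scale c1 t1 e1 x) (p - t1))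
          (fst (weighted_shift scale c2 t2 e2 y) (- (p - t1)))
        = of_int (p - t1) * (c1 p * c2 (t1 + t2 - p)) * B (fst x p) (fst y (t1 + t2 - p))"
      unfolding fst_weighted_shift eq by (simp add: form_scale[OF L] mult.assoc)
  qed
  finally show ?thesis .
qed

lemma weighted_shift_bracket:
  assumes L: "lie_algebra_with_form scale br B" and x: "x \<in> aff_carrier"
    and tau: "\<And>s. s \<le> r \<Longrightarrow> tau s + tau (r - s) = tau r" "tau 0 = 0"
    and convolution: "\<And>p q. c r (p + q) = (\<Sum>s\<le>r. c s p * c (r - s) q)"
    and central: "\<And>p. (\<Sum>s\<le>r. of_int (p - tau s) * (c s p * c (r - s) (tau r - p)))
                         = (if r = 0 then of_int p else 0)"
  \<comment> \<open>\<open>convolution\<close> handles the loop part of the bracket, \<open>central\<close> its cocycle part\<close>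
  shows "weighted_shift scale (c r) (tau r) (if r = 0 then 1 else 0) (aff_bracket br B x y)
    = aff_sum {..r} (\<lambda>s. aff_bracket br B
        (weighted_shift scale (c s) (tau s) (if s = 0 then 1 else 0) x)
        (weighted_shift scale (c (r - s)) (tau (r - s)) (if r - s = 0 then 1 else 0) y))"
    (is "?lhs = aff_sum {..r} ?rhs")
proof (rule prod_eqI)
  let ?S = "{n. fst x n \<noteq> 0}"
  show "fst ?lhs = fst (aff_sum {..r} ?rhs)"
  proof
    fix n'
    define N where "N = n' + tau r"
    have "fst ?lhs n' = scale (c r N) (\<Sum>p\<in>?S. br (fst x p) (fst y (N - p)))"
      by (simp add: fst_weighted_shift aff_bracket_def N_def)
    also have "\<dots> = (\<Sum>p\<in>?S. \<Sum>s\<le>r. scale (c s p * c (r - s) (N - p)) (br (fst x p) (fst y (N - p))))"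
      unfolding scale_sum_right
    proof (rule sum.cong[OF refl])
      fix p
      show "scale (c r N) (br (fst x p) (fst y (N - p)))
          = (\<Sum>s\<le>r. scale (c s p * c (r - s) (N - p)) (br (fst x p) (fst y (N - p))))"
        using convolution[of p "N - p"] by (simp add: scale_sum_left)
    qed
    also have "\<dots> = (\<Sum>s\<le>r. \<Sum>p\<in>?S. scale (c s p * c (r - s) (N - p)) (br (fst x p) (fst y (N - p))))"
      by (rule sum.swap)
    also have "\<dots> = (\<Sum>s\<le>r. fst (?rhs s) n')"
    proof (rule sum.cong[OF refl])
      fix s assume "s \<in> {..r}"
      then have "n' + tau s + tau (r - s) = N" using tau(1)[of s] by (simp add: N_def)
      then show "(\<Sum>p\<in>?S. scale (c s p * c (r - s) (N - p)) (br (fst x p) (fst y (N - p))))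
          = fst (?rhs s) n'"
        by (simp add: fst_bracket_weighted_shift[OF L x])
    qed
    finally show "fst ?lhs n' = fst (aff_sum {..r} ?rhs) n'" by (simp add: aff_sum_def)
  qed
  have "snd (aff_sum {..r} ?rhs)
      = (\<Sum>s\<le>r. \<Sum>p\<in>?S.
           of_int (p - tau s) * (c s p * c (r - s) (tau r - p)) * B (fst x p) (fst y (tau r - p)))"
    unfolding aff_sum_def snd_conv
  proof (rule sum.cong[OF refl])
    fix s assume "s \<in> {..r}"
    then show "snd (?rhs s) = (\<Sum>p\<in>?S.
        of_int (p - tau s) * (c s p * c (r - s) (tau r - p)) * B (fst x p) (fst y (tau r - p)))"
      using tau(1)[of s] by (simp add: snd_bracket_weighted_shift[OF L x])
  qed
  also have "\<dots> = (\<Sum>p\<in>?S. (if r = 0 then of_int p else 0) * B (fst x p) (fst y (tau r - p)))"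
    by (subst sum.swap) (simp only: sum_distrib_right[symmetric] central)
  also have "\<dots> = snd ?lhs"
    by (cases "r = 0") (simp_all add: snd_weighted_shift aff_bracket_def tau(2) sum_distrib_left)
  finally show "snd ?lhs = snd (aff_sum {..r} ?rhs)" ..
qed


lemma weighted_shift_bracket_of_int:
  fixes c :: "nat \<Rightarrow> int \<Rightarrow> int"
  assumes L: "lie_algebra_with_form scale br B" and x: "x \<in> aff_carrier"
    and tau: "\<And>s. s \<le> r \<Longrightarrow> tau s + tau (r - s) = tau r" "tau 0 = 0"
    and convolution: "\<And>p q. c r (p + q) = (\<Sum>s\<le>r. c s p * c (r - s) q)"
    and central:
      "\<And>p. (\<Sum>s\<le>r. (p - tau s) * (c s p * c (r - s) (tau r - p))) = (if r = 0 then p else 0)"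
  shows "weighted_shift scale (\<lambda>n. of_int (c r n)) (tau r) (if r = 0 then 1 else 0)
      (aff_bracket br B x y) = aff_sum {..r} (\<lambda>s. aff_bracket br B
        (weighted_shift scale (\<lambda>n. of_int (c s n)) (tau s) (if s = 0 then 1 else 0) x)
        (weighted_shift scale (\<lambda>n. of_int (c (r - s) n)) (tau (r - s)) (if r - s = 0 then 1 else 0) y))"
proof (rule weighted_shift_bracket[OF L x tau, where c="\<lambda>s n. of_int (c s n)"])
  show "(of_int (c r (p + q)) :: 'a) = (\<Sum>s\<le>r. of_int (c s p) * of_int (c (r - s) q))" for p q
    by (simp add: convolution)
  show "(\<Sum>s\<le>r. of_int (p - tau s) * (of_int (c s p) * of_int (c (r - s) (tau r - p))))
      = (if r = 0 then of_int p else 0 :: 'a)" for p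
    using arg_cong[OF central[of p], of "of_int :: int \<Rightarrow> 'a"]
    by (simp only: of_int_sum of_int_mult) (simp split: if_splits)
qed

end

lemma loop_coeff_L_m1_div:
  "loop_coeff (L_m1_div r) n' n = (if n = n' + int r then of_int ((-1) ^ r * ibinom n r) else 0)"
  by (auto simp: loop_coeff_def extrapolated_entry_L_m1_div add.commute
      simp del: of_int_mult of_int_power)

lemma loop_coeff_L_1_div:
  "loop_coeff (L_1_div r) n' n = (if n = n' - int r then of_int (ibinom (- n) r) else 0)"
  by (auto simp: loop_coeff_def extrapolated_entry_L_1_div)

lemma loop_coeff_L_0_div:
  "loop_coeff (L_0_div r) n' n = (if n = n' then of_int (ibinom (2 * n) r) else 0)"
  by (auto simp: loop_coeff_def extrapolated_entry_L_0_div)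

context vector_space
begin

lemma loop_action_weighted_shift:
  assumes x: "x \<in> aff_carrier"
    and coeff: "\<And>n' n. (loop_coeff u n' n :: 'a) = (if n = n' + t then c n else 0)"
    and e: "of_int \<lfloor>u 0 0 0\<rfloor> = e"
  shows "loop_action scale u x = weighted_shift scale c t e x"
proof (rule prod_eqI)
  have "finite {n. fst x n \<noteq> 0}" using x by (simp add: aff_carrier_def)
  then show "fst (loop_action scale u x) = fst (weighted_shift scale c t e x)"
    by (auto simp: loop_action_def weighted_shift_def coeff if_distrib[of "\<lambda>c. scale c _"] fun_eq_iff
        cong: if_cong)
qed (simp add: loop_action_def weighted_shift_def e)

lemma loop_action_L_m1_div:
  "x \<in> aff_carrier \<Longrightarrow> loop_action scale (L_m1_div r) x
     = weighted_shift scale (\<lambda>n. of_int ((-1) ^ r * ibinom n r)) (int r) (if r = 0 then 1 else 0) x"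
  by (rule loop_action_weighted_shift) (simp_all add: loop_coeff_L_m1_div L_m1_div_entry)

lemma loop_action_L_1_div:
  "x \<in> aff_carrier \<Longrightarrow> loop_action scale (L_1_div r) x
     = weighted_shift scale (\<lambda>n. of_int (ibinom (- n) r)) (- int r) (if r = 0 then 1 else 0) x"
  by (rule loop_action_weighted_shift) (simp_all add: loop_coeff_L_1_div L_1_div_entry)

lemma loop_action_L_0_div:
  "x \<in> aff_carrier \<Longrightarrow> loop_action scale (L_0_div r) x
     = weighted_shift scale (\<lambda>n. of_int (ibinom (2 * n) r)) 0 (if r = 0 then 1 else 0) x"
  by (rule loop_action_weighted_shift) (simp_all add: loop_coeff_L_0_div L_0_div_entry gbinomial_0_left)

lemma loop_action_L_m1_div_bracket:
  assumes L: "lie_algebra_with_form scale br B" and x: "x \<in> aff_carrier" and y: "y \<in> aff_carrier"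
  shows "loop_action scale (L_m1_div r) (aff_bracket br B x y)
    = aff_sum {..r} (\<lambda>s. aff_bracket br B (loop_action scale (L_m1_div s) x)
                                          (loop_action scale (L_m1_div (r - s)) y))"
  unfolding loop_action_L_m1_div[OF aff_bracket_carrier[OF L x y]] loop_action_L_m1_div[OF x]
    loop_action_L_m1_div[OF y]
  by (rule weighted_shift_bracket_of_int[OF L x, where c="\<lambda>s n. (-1) ^ s * ibinom n s" and tau=int])
     (simp_all add: ibinom_sign_convolution ibinom_sign_central)

lemma loop_action_L_1_div_bracket:
  assumes L: "lie_algebra_with_form scale br B" and x: "x \<in> aff_carrier" and y: "y \<in> aff_carrier"
  shows "loop_action scale (L_1_div r) (aff_bracket br B x y)
    = aff_sum {..r} (\<lambda>s. aff_bracket br B (loop_action scale (L_1_div s) x)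
                                          (loop_action scale (L_1_div (r - s)) y))"
  unfolding loop_action_L_1_div[OF aff_bracket_carrier[OF L x y]] loop_action_L_1_div[OF x]
    loop_action_L_1_div[OF y]
  by (rule weighted_shift_bracket_of_int[OF L x, where c="\<lambda>s n. ibinom (- n) s" and tau="\<lambda>s. - int s"])
     (simp_all add: ibinom_vandermonde[of "- p" "- q" for p q, simplified] ibinom_neg_central)

lemma loop_action_L_0_div_bracket:
  assumes L: "lie_algebra_with_form scale br B" and x: "x \<in> aff_carrier" and y: "y \<in> aff_carrier"
  shows "loop_action scale (L_0_div r) (aff_bracket br B x y)
    = aff_sum {..r} (\<lambda>s. aff_bracket br B (loop_action scale (L_0_div s) x)
                                          (loop_action scale (L_0_div (r - s)) y))"
  unfolding loop_action_L_0_div[OF aff_bracket_carrier[OF L x y]] loop_action_L_0_div[OF x]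
    loop_action_L_0_div[OF y]
  by (rule weighted_shift_bracket_of_int[OF L x, where c="\<lambda>s n. ibinom (2 * n) s" and tau="\<lambda>_. 0"])
     (simp_all add: ibinom_vandermonde[of "2 * p" "2 * q" for p q, simplified] ibinom_double_central)

lemma loop_action_pbw:
  "x \<in> aff_carrier \<Longrightarrow>
   loop_action scale (pbw a b c) x
   = loop_action scale (L_m1_div a) (loop_action scale (L_0_div b) (loop_action scale (L_1_div c) x))"
  by (simp add: pbw_def loop_action_umult admissible_umult admissible_L_m1_div admissible_L_0_div
      admissible_L_1_div loop_action_carrier)

lemma loop_action_pbw_bracket:
  assumes L: "lie_algebra_with_form scale br B" and x: "x \<in> aff_carrier" and y: "y \<in> aff_carrier"
  shows "loop_action scale (pbw i j k) (aff_bracket br B x y)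
    = aff_sum {(a, b, c). a \<le> i \<and> b \<le> j \<and> c \<le> k}
        (\<lambda>(a, b, c). aff_bracket br B (loop_action scale (pbw a b c) x)
                                    (loop_action scale (pbw (i - a) (j - b) (k - c)) y))"
proof -
  define X where "X a = loop_action scale (L_m1_div a)" for a
  define H where "H a = loop_action scale (L_0_div a)" for a
  define E where "E a = loop_action scale (L_1_div a)" for a
  have carrier: "z \<in> aff_carrier \<Longrightarrow> X a z \<in> aff_carrier"
    "z \<in> aff_carrier \<Longrightarrow> H a z \<in> aff_carrier" "z \<in> aff_carrier \<Longrightarrow> E a z \<in> aff_carrier" for a z
    by (simp_all add: X_def H_def E_def loop_action_carrier admissible_L_m1_div admissible_L_0_div
        admissible_L_1_div)
  note bc = aff_bracket_carrier[OF L]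
  have "loop_action scale (pbw i j k) (aff_bracket br B x y) = X i (H j (E k (aff_bracket br B x y)))"
    by (simp add: loop_action_pbw bc x y X_def H_def E_def)
  also have "\<dots> = X i (H j (aff_sum {..k} (\<lambda>c. aff_bracket br B (E c x) (E (k - c) y))))"
    by (simp add: E_def loop_action_L_1_div_bracket[OF L x y])
  also have "\<dots> = X i (aff_sum {..k} (\<lambda>c. H j (aff_bracket br B (E c x) (E (k - c) y))))"
    unfolding H_def by (subst loop_action_aff_sum) (auto intro!: bc carrier x y)
  also have "\<dots> = X i (aff_sum {..k} (\<lambda>c. aff_sum {..j} (\<lambda>b.
      aff_bracket br B (H b (E c x)) (H (j - b) (E (k - c) y)))))"
    by (intro arg_cong[where f="X i"] aff_sum_cong)
       (simp add: H_def loop_action_L_0_div_bracket[OF L] carrier x y)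
  also have "\<dots> = aff_sum {..k} (\<lambda>c. aff_sum {..j} (\<lambda>b. X i (
      aff_bracket br B (H b (E c x)) (H (j - b) (E (k - c) y)))))"
    unfolding X_def
    by (subst loop_action_aff_sum)
       (auto intro!: aff_sum_carrier bc carrier x y aff_sum_cong loop_action_aff_sum)
  also have "\<dots> = aff_sum {..k} (\<lambda>c. aff_sum {..j} (\<lambda>b. aff_sum {..i} (\<lambda>a.
      aff_bracket br B (X a (H b (E c x))) (X (i - a) (H (j - b) (E (k - c) y))))))"
    by (intro aff_sum_cong) (simp add: X_def loop_action_L_m1_div_bracket[OF L] carrier x y)
  also have "\<dots> = aff_sum {(a, b, c). a \<le> i \<and> b \<le> j \<and> c \<le> k}
      (\<lambda>(a, b, c). aff_bracket br B (loop_action scale (pbw a b c) x)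
                                  (loop_action scale (pbw (i - a) (j - b) (k - c)) y))"
    by (simp add: aff_sum_triple loop_action_pbw x y X_def H_def E_def)
  finally show ?thesis .
qed

end

theorem lemma5p1:
  fixes scale :: "'k::alg_closed_field \<Rightarrow> 'g::ab_group_add \<Rightarrow> 'g"
    and br :: "'g \<Rightarrow> 'g \<Rightarrow> 'g"
    and B :: "'g \<Rightarrow> 'g \<Rightarrow> 'k"
  assumes "prime CHAR('k)" and "odd CHAR('k)"
    and "lie_algebra_with_form scale br B"
  shows "\<exists>\<rho> :: U \<Rightarrow> ('g, 'k) aff \<Rightarrow> ('g, 'k) aff.
     \<comment> \<open>each element of U(sl_2)_Z acts by an F-linear endomorphism of g-hat\<close>
     (\<forall>u\<in>UZ. \<forall>x\<in>aff_carrier. \<rho> u x \<in> aff_carrier)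
   \<and> (\<forall>u\<in>UZ. \<forall>x\<in>aff_carrier. \<forall>y\<in>aff_carrier.
        \<rho> u (aff_add x y) = aff_add (\<rho> u x) (\<rho> u y))
   \<and> (\<forall>u\<in>UZ. \<forall>x\<in>aff_carrier. \<forall>c.
        \<rho> u (aff_scale scale c x) = aff_scale scale c (\<rho> u x))
     \<comment> \<open>ring homomorphism U(sl_2)_Z \<rightarrow> End_F(g-hat), i.e. an H-module structure\<close>
   \<and> (\<forall>u\<in>UZ. \<forall>v\<in>UZ. \<forall>x\<in>aff_carrier. \<rho> (uadd u v) x = aff_add (\<rho> u x) (\<rho> v x))
   \<and> (\<forall>u\<in>UZ. \<forall>v\<in>UZ. \<forall>x\<in>aff_carrier. \<rho> (umult u v) x = \<rho> u (\<rho> v x))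
   \<and> (\<forall>x\<in>aff_carrier. \<rho> uone x = x)
     \<comment> \<open>the prescribed action\<close>
   \<and> (\<forall>r. \<rho> (L_m1_div r) aff_k = aff_scale scale (if r = 0 then 1 else 0) aff_k)
   \<and> (\<forall>r. \<rho> (L_1_div r) aff_k = aff_scale scale (if r = 0 then 1 else 0) aff_k)
   \<and> (\<forall>r. \<rho> (L_0_div r) aff_k = aff_scale scale (if r = 0 then 1 else 0) aff_k)
   \<and> (\<forall>r a n. \<rho> (L_m1_div r) (aff_loop a n)
        = aff_scale scale (of_int ((-1) ^ r * (ibinom n r))) (aff_loop a (n - int r)))
   \<and> (\<forall>r a n. \<rho> (L_1_div r) (aff_loop a n)
        = aff_scale scale (of_int (ibinom (- n) r)) (aff_loop a (n + int r)))
   \<and> (\<forall>r a n. \<rho> (L_0_div r) (aff_loop a n)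
        = aff_scale scale (of_int (ibinom (2 * n) r)) (aff_loop a n))
     \<comment> \<open>module Lie algebra compatibility b[x,y] = \<Sum> [b(1) x, b(2) y], checked on the
        F-basis of PBW monomials (both sides are linear in b)\<close>
   \<and> (\<forall>i j k. \<forall>x\<in>aff_carrier. \<forall>y\<in>aff_carrier.
        \<rho> (pbw i j k) (aff_bracket br B x y)
        = aff_sum {(a, b, c). a \<le> i \<and> b \<le> j \<and> c \<le> k}
            (\<lambda>(a, b, c). aff_bracket br B (\<rho> (pbw a b c) x) (\<rho> (pbw (i - a) (j - b) (k - c)) y)))"
proof -
  interpret vector_space scale
    using assms(3) by (simp add: lie_algebra_with_form_def)
  have k: "(aff_k :: ('g, 'k) aff) \<in> aff_carrier" by (simp add: aff_k_def aff_carrier_def)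
  have loop: "(aff_loop a n :: ('g, 'k) aff) \<in> aff_carrier" for a n
    by (simp add: aff_loop_def aff_carrier_def)
  show ?thesis
    by (intro exI[of _ "loop_action scale"] conjI ballI allI)
       (simp_all add: loop_action_carrier admissible_UZ loop_action_add loop_action_scale
         loop_action_uadd loop_action_umult loop_action_uone loop_action_pbw_bracket[OF assms(3)]
         loop_action_L_m1_div[OF k] loop_action_L_1_div[OF k] loop_action_L_0_div[OF k]
         loop_action_L_m1_div[OF loop] loop_action_L_1_div[OF loop] loop_action_L_0_div[OF loop]
         weighted_shift_aff_k weighted_shift_aff_loop)
qed

end
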